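(* Let $k$ be a commutative ring, $P$ an invertible $k$-module, $Q=P^*$, and $A$ a $P$-Frobenius $k$-algebra with Frobenius system $(\psi,x_i,q_i,y_i)$. Then $A$ is a separable $k$-algebra if and only if there is $d=\sum_jp_j\otimes a_j\in P\otimes_kA$ such that \[ \sum_{i,j}x_i\,q_i(p_j)\,a_j\,y_i=1_A. \]
   Context: $A$ is $P$-Frobenius if it is finitely generated projective over $k$ and $A_A\cong\mathrm{Hom}_k(A,P)_A$, where $(\psi a)(x)=\psi(ax)$. A Frobenius system consists of $\psi\in\mathrm{Hom}_k(A,P)$ such that $a\mapsto\psi a$ is an isomorphism $A\to\mathrm{Hom}_k(A,P)$, and finitely many $x_i,y_i\in A$, $q_i\in Q$ with $\sum_ix_i\,q_i(\psi(y_ia))=a$ and $\sum_iq_i(\psi(ax_i))\,y_i=a$ for all $a\in A$. *)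

theory Defs
  imports Complex_Main "HOL-Library.Function_Algebras"
begin

text \<open>Modules over a commutative ring k (type 'k) are given, as in HOL.Modules,
by a scalar multiplication on an abelian group type.  k-linear maps are
module_hom.\<close>

definition dual_space :: "('k::comm_ring_1 \<Rightarrow> 'm::ab_group_add \<Rightarrow> 'm) \<Rightarrow> ('m \<Rightarrow> 'k) set" where
  "dual_space s = {f. module_hom s (*) f}"

text \<open>Finitely generated projective (dual basis form: retract of k^n).\<close>
definition fg_projective :: "('k::comm_ring_1 \<Rightarrow> 'm::ab_group_add \<Rightarrow> 'm) \<Rightarrow> bool" where
  "fg_projective s \<longleftrightarrow> module s \<and>
     (\<exists>(n::nat) (e::nat \<Rightarrow> 'm) (f::nat \<Rightarrow> 'm \<Rightarrow> 'k).
        (\<forall>i<n. f i \<in> dual_space s) \<and> (\<forall>m. m = (\<Sum>i<n. s (f i m) (e i))))"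

text \<open>Tensor product M \<otimes>_k N of submodules M, N (carriers) of modules,
constructed as the free k-module on M \<times> N (finitely supported functions)
modulo the bilinearity relations.  An element of M \<otimes> N is represented by a
finite list of pairs (m,n), standing for the sum of the pure tensors m \<otimes> n.\<close>

definition tdelta :: "'m \<times> 'n \<Rightarrow> ('m \<times> 'n \<Rightarrow> 'k::comm_ring_1)" where
  "tdelta z = (\<lambda>w. if w = z then 1 else 0)"

definition fscale :: "'k::comm_ring_1 \<Rightarrow> ('x \<Rightarrow> 'k) \<Rightarrow> ('x \<Rightarrow> 'k)" where
  "fscale c f = (\<lambda>w. c * f w)"

definition tensor_relations ::
  "('k::comm_ring_1 \<Rightarrow> 'm::ab_group_add \<Rightarrow> 'm) \<Rightarrow> 'm set \<Rightarrow>
   ('k \<Rightarrow> 'n::ab_group_add \<Rightarrow> 'n) \<Rightarrow> 'n set \<Rightarrow> ('m \<times> 'n \<Rightarrow> 'k) set" where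
  "tensor_relations sM M sN N =
     {tdelta (m + m', n) - tdelta (m, n) - tdelta (m', n) | m m' n. m \<in> M \<and> m' \<in> M \<and> n \<in> N}
   \<union> {tdelta (m, n + n') - tdelta (m, n) - tdelta (m, n') | m n n'. m \<in> M \<and> n \<in> N \<and> n' \<in> N}
   \<union> {tdelta (sM c m, n) - fscale c (tdelta (m, n)) | c m n. m \<in> M \<and> n \<in> N}
   \<union> {tdelta (m, sN c n) - fscale c (tdelta (m, n)) | c m n. m \<in> M \<and> n \<in> N}"

definition formal_sum :: "('m \<times> 'n) list \<Rightarrow> ('m \<times> 'n \<Rightarrow> 'k::comm_ring_1)" where
  "formal_sum xs = sum_list (map tdelta xs)"

definition tensor_eq ::
  "('k::comm_ring_1 \<Rightarrow> 'm::ab_group_add \<Rightarrow> 'm) \<Rightarrow> 'm set \<Rightarrow>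
   ('k \<Rightarrow> 'n::ab_group_add \<Rightarrow> 'n) \<Rightarrow> 'n set \<Rightarrow> ('m \<times> 'n) list \<Rightarrow> ('m \<times> 'n) list \<Rightarrow> bool" where
  "tensor_eq sM M sN N xs ys \<longleftrightarrow> set xs \<subseteq> M \<times> N \<and> set ys \<subseteq> M \<times> N \<and>
     (formal_sum xs - formal_sum ys :: 'm \<times> 'n \<Rightarrow> 'k)
        \<in> module.span (fscale :: 'k \<Rightarrow> _) (tensor_relations sM M sN N)"

text \<open>Invertible k-module: finitely generated projective and the evaluation
map P \<otimes>_k P* \<rightarrow> k, p \<otimes> q \<mapsto> q(p), is an isomorphism.\<close>
definition invertible_module :: "('k::comm_ring_1 \<Rightarrow> 'p::ab_group_add \<Rightarrow> 'p) \<Rightarrow> bool" where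
  "invertible_module s \<longleftrightarrow> fg_projective s \<and>
     (\<forall>c::'k. \<exists>ts. set ts \<subseteq> UNIV \<times> dual_space s \<and> (\<Sum>(p,q)\<leftarrow>ts. q p) = c) \<and>
     (\<forall>ts us. set ts \<subseteq> UNIV \<times> dual_space s \<longrightarrow> set us \<subseteq> UNIV \<times> dual_space s \<longrightarrow>
        (\<Sum>(p,q)\<leftarrow>ts. q p) = (\<Sum>(p,q)\<leftarrow>us. q p) \<longrightarrow>
        tensor_eq s UNIV (fscale :: 'k \<Rightarrow> ('p \<Rightarrow> 'k) \<Rightarrow> _) (dual_space s) ts us)"

definition k_algebra :: "('k::comm_ring_1 \<Rightarrow> 'a::ring_1 \<Rightarrow> 'a) \<Rightarrow> bool" where
  "k_algebra s \<longleftrightarrow> module s \<and> (\<forall>c a b. s c (a * b) = s c a * b \<and> s c (a * b) = a * s c b)"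

definition separable_algebra :: "('k::comm_ring_1 \<Rightarrow> 'a::ring_1 \<Rightarrow> 'a) \<Rightarrow> bool" where
  "separable_algebra s \<longleftrightarrow> (\<exists>es :: ('a \<times> 'a) list.
     (\<Sum>(u,v)\<leftarrow>es. u * v) = 1 \<and>
     (\<forall>a. tensor_eq s UNIV s UNIV (map (\<lambda>(u,v). (a * u, v)) es) (map (\<lambda>(u,v). (u, v * a)) es)))"

text \<open>P-Frobenius: A f.g. projective over k and A_A \<cong> Hom_k(A,P)_A, with
(\<psi> a)(x) = \<psi>(a x); every right A-linear map A \<rightarrow> Hom_k(A,P) is a \<mapsto> \<psi> a
for \<psi> the image of 1.\<close>
definition P_frobenius :: "('k::comm_ring_1 \<Rightarrow> 'p::ab_group_add \<Rightarrow> 'p) \<Rightarrow> ('k \<Rightarrow> 'a::ring_1 \<Rightarrow> 'a) \<Rightarrow> bool" where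
  "P_frobenius sP sA \<longleftrightarrow> fg_projective sA \<and>
     (\<exists>\<psi>. module_hom sA sP \<psi> \<and> bij_betw (\<lambda>a. \<lambda>z. \<psi> (a * z)) UNIV {f. module_hom sA sP f})"

definition frobenius_system ::
  "('k::comm_ring_1 \<Rightarrow> 'p::ab_group_add \<Rightarrow> 'p) \<Rightarrow> ('k \<Rightarrow> 'a::ring_1 \<Rightarrow> 'a) \<Rightarrow> ('a \<Rightarrow> 'p) \<Rightarrow>
   nat \<Rightarrow> (nat \<Rightarrow> 'a) \<Rightarrow> (nat \<Rightarrow> 'p \<Rightarrow> 'k) \<Rightarrow> (nat \<Rightarrow> 'a) \<Rightarrow> bool" where
  "frobenius_system sP sA \<psi> n x q y \<longleftrightarrow>
     module_hom sA sP \<psi> \<and> bij_betw (\<lambda>a. \<lambda>z. \<psi> (a * z)) UNIV {f. module_hom sA sP f} \<and>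
     (\<forall>i<n. q i \<in> dual_space sP) \<and>
     (\<forall>a. (\<Sum>i<n. sA (q i (\<psi> (y i * a))) (x i)) = a) \<and>
     (\<forall>a. (\<Sum>i<n. sA (q i (\<psi> (a * x i))) (y i)) = a)"

end

theory Submission
  imports Defs
begin

(* If e = sum_l u_l (x) v_l is a separability idempotent, apply to a e = e a, for a = x_i, the
   k-bilinear map (u, v) |-> q_i(psi v) u, and expand 1 = sum_l u_l v_l with the Frobenius system:
   this yields d with p_l = psi v_l and a_l = u_l.  Conversely, given d, the element
   e = sum_{i,j} x_i (x) q_i(p_j) a_j y_i is a separability idempotent: expanding b x_i along the
   x_k and y_i b along the y_k turns b e and e b into the same double sum, provided
   q(z) q'(p) = q(p) q'(z) for all q, q' in P*.  This is where invertibility of P enters: it is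
   the statement that End(P) = k, proved by comparing p (x) r with a coevaluation element in
   P (x) P* and showing that the trace sum_i f_i(e_i) of a dual basis is 1. *)

interpretation fs: module "fscale :: 'k::comm_ring_1 \<Rightarrow> ('x \<Rightarrow> 'k) \<Rightarrow> _"
  by unfold_locales (auto simp: fscale_def fun_eq_iff algebra_simps)

definition finitely_supported :: "('x \<Rightarrow> 'k::zero) \<Rightarrow> bool" where
  "finitely_supported g \<longleftrightarrow> finite {w. g w \<noteq> 0}"

lemma finitely_supported_add:
  "finitely_supported g \<Longrightarrow> finitely_supported h \<Longrightarrow> finitely_supported (g + h :: _ \<Rightarrow> 'k::monoid_add)"
  unfolding finitely_supported_def
  by (rule finite_subset[of _ "{w. g w \<noteq> 0} \<union> {w. h w \<noteq> 0}"]) auto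

lemma finitely_supported_diff:
  "finitely_supported g \<Longrightarrow> finitely_supported h \<Longrightarrow> finitely_supported (g - h :: _ \<Rightarrow> 'k::group_add)"
  unfolding finitely_supported_def
  by (rule finite_subset[of _ "{w. g w \<noteq> 0} \<union> {w. h w \<noteq> 0}"]) auto

lemma finitely_supported_fscale:
  "finitely_supported g \<Longrightarrow> finitely_supported (fscale c g :: _ \<Rightarrow> 'k::comm_ring_1)"
  unfolding finitely_supported_def
  by (rule finite_subset[of _ "{w. g w \<noteq> 0}"]) (auto simp: fscale_def)

lemma finitely_supported_tdelta: "finitely_supported (tdelta z :: _ \<Rightarrow> 'k::comm_ring_1)"
  unfolding finitely_supported_def
  by (rule finite_subset[of _ "{z}"]) (auto simp: tdelta_def)

lemma finitely_supported_formal_sum: "finitely_supported (formal_sum xs :: _ \<Rightarrow> 'k::comm_ring_1)"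
proof (induction xs)
  case Nil
  then show ?case by (simp add: formal_sum_def finitely_supported_def)
next
  case (Cons z xs)
  then show ?case
    unfolding formal_sum_def list.map sum_list.Cons
    by (intro finitely_supported_add finitely_supported_tdelta)
qed

definition lincomb :: "('k::comm_ring_1 \<Rightarrow> 'v \<Rightarrow> 'v) \<Rightarrow> ('x \<Rightarrow> 'v) \<Rightarrow> ('x \<Rightarrow> 'k) \<Rightarrow> 'v::ab_group_add" where
  "lincomb sV G g = (\<Sum>w | g w \<noteq> 0. sV (g w) (G w))"

context module
begin

lemma lincomb_eq_sum:
  assumes "finite S" "{w. g w \<noteq> 0} \<subseteq> S"
  shows "lincomb scale G g = (\<Sum>w\<in>S. scale (g w) (G w))"
  unfolding lincomb_def using assms by (intro sum.mono_neutral_left) auto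

lemma lincomb_add:
  assumes "finitely_supported g" "finitely_supported h"
  shows "lincomb scale G (g + h) = lincomb scale G g + lincomb scale G h"
proof -
  let ?S = "{w. g w \<noteq> 0} \<union> {w. h w \<noteq> 0}"
  have "lincomb scale G (g + h) = (\<Sum>w\<in>?S. scale (g w) (G w)) + (\<Sum>w\<in>?S. scale (h w) (G w))"
    using assms unfolding finitely_supported_def
    by (subst lincomb_eq_sum[of ?S]) (auto simp: scale_left_distrib sum.distrib)
  also have "\<dots> = lincomb scale G g + lincomb scale G h"
    using assms unfolding finitely_supported_def by (subst (1 2) lincomb_eq_sum[of ?S]) auto
  finally show ?thesis .
qed

lemma lincomb_diff:
  assumes "finitely_supported g" "finitely_supported h"
  shows "lincomb scale G (g - h) = lincomb scale G g - lincomb scale G h"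
proof -
  have "lincomb scale G g = lincomb scale G (g - h + h)"
    by simp
  also have "\<dots> = lincomb scale G (g - h) + lincomb scale G h"
    by (rule lincomb_add[OF finitely_supported_diff[OF assms] assms(2)])
  finally show ?thesis
    by (simp only: eq_diff_eq)
qed

lemma lincomb_fscale:
  assumes "finitely_supported g"
  shows "lincomb scale G (fscale c g) = scale c (lincomb scale G g)"
proof -
  have "lincomb scale G (fscale c g) = (\<Sum>w | g w \<noteq> 0. scale (fscale c g w) (G w))"
    using assms unfolding finitely_supported_def by (rule lincomb_eq_sum) (auto simp: fscale_def)
  then show ?thesis
    by (simp add: lincomb_def fscale_def scale_sum_right)
qed

lemma lincomb_tdelta: "lincomb scale G (tdelta z) = G z"
  by (subst lincomb_eq_sum[of "{z}"]) (auto simp: tdelta_def)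

lemma lincomb_formal_sum: "lincomb scale G (formal_sum xs) = (\<Sum>z\<leftarrow>xs. G z)"
proof (induction xs)
  case Nil
  then show ?case by (simp add: formal_sum_def lincomb_def)
next
  case (Cons z xs)
  have "lincomb scale G (formal_sum (z # xs)) = lincomb scale G (tdelta z + formal_sum xs)"
    by (simp only: formal_sum_def list.map sum_list.Cons)
  also have "\<dots> = G z + lincomb scale G (formal_sum xs)"
    by (simp only: lincomb_add[OF finitely_supported_tdelta finitely_supported_formal_sum]
        lincomb_tdelta)
  finally show ?case
    using Cons.IH by simp
qed

lemma tensor_eq_bilinear:
  assumes add_left: "\<And>m m' n. m \<in> M \<Longrightarrow> m' \<in> M \<Longrightarrow> n \<in> N \<Longrightarrow> F (m + m') n = F m n + F m' n"
    and add_right: "\<And>m n n'. m \<in> M \<Longrightarrow> n \<in> N \<Longrightarrow> n' \<in> N \<Longrightarrow> F m (n + n') = F m n + F m n'"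
    and scale_left: "\<And>c m n. m \<in> M \<Longrightarrow> n \<in> N \<Longrightarrow> F (sM c m) n = scale c (F m n)"
    and scale_right: "\<And>c m n. m \<in> M \<Longrightarrow> n \<in> N \<Longrightarrow> F m (sN c n) = scale c (F m n)"
    and "tensor_eq sM M sN N xs ys"
  shows "(\<Sum>(m, n)\<leftarrow>xs. F m n) = (\<Sum>(m, n)\<leftarrow>ys. F m n)"
proof -
  let ?G = "\<lambda>(m, n). F m n"
  let ?P = "\<lambda>g. finitely_supported g \<and> lincomb scale ?G g = 0"
  have subspace: "fs.subspace (Collect ?P)"
    by (auto simp: fs.subspace_def lincomb_add lincomb_fscale finitely_supported_add
        finitely_supported_fscale) (simp_all add: lincomb_def finitely_supported_def)
  have relations: "?P r" if "r \<in> tensor_relations sM M sN N" for r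
    using that unfolding tensor_relations_def
    by (auto simp: lincomb_diff lincomb_fscale lincomb_tdelta finitely_supported_diff
        finitely_supported_fscale finitely_supported_tdelta
        add_left add_right scale_left scale_right)
  have "formal_sum xs - formal_sum ys \<in> fs.span (tensor_relations sM M sN N)"
    using assms(5) unfolding tensor_eq_def by blast
  then have "?P (formal_sum xs - formal_sum ys)"
    by (rule fs.span_induct[OF _ subspace relations])
  then show ?thesis
    by (simp add: lincomb_diff finitely_supported_formal_sum lincomb_formal_sum case_prod_beta')
qed

end

definition tensor_cong ::
  "('k::comm_ring_1 \<Rightarrow> 'm::ab_group_add \<Rightarrow> 'm) \<Rightarrow> ('k \<Rightarrow> 'n::ab_group_add \<Rightarrow> 'n) \<Rightarrow>
   ('m \<times> 'n \<Rightarrow> 'k) \<Rightarrow> ('m \<times> 'n \<Rightarrow> 'k) \<Rightarrow> bool" where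
  "tensor_cong sM sN g h \<longleftrightarrow> g - h \<in> fs.span (tensor_relations sM UNIV sN UNIV)"

lemma tensor_eq_UNIV_iff:
  "tensor_eq sM UNIV sN UNIV xs ys \<longleftrightarrow> tensor_cong sM sN (formal_sum xs) (formal_sum ys)"
  by (simp add: tensor_eq_def tensor_cong_def)

lemma tensor_cong_sym: "tensor_cong sM sN g h \<Longrightarrow> tensor_cong sM sN h g"
  unfolding tensor_cong_def using fs.span_neg by fastforce

lemma tensor_cong_trans [trans]:
  "tensor_cong sM sN f g \<Longrightarrow> tensor_cong sM sN g h \<Longrightarrow> tensor_cong sM sN f h"
  unfolding tensor_cong_def using fs.span_add by fastforce

lemma tensor_cong_sum:
  "(\<And>i. i \<in> I \<Longrightarrow> tensor_cong sM sN (g i) (h i)) \<Longrightarrow>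
   tensor_cong sM sN (\<Sum>i\<in>I. g i) (\<Sum>i\<in>I. h i)"
  unfolding tensor_cong_def using fs.span_sum[of I "\<lambda>i. g i - h i"] by (simp add: sum_subtractf)

lemma tensor_cong_add_left:
  "tensor_cong sM sN (tdelta (u + u', v)) (tdelta (u, v) + tdelta (u', v))"
  unfolding tensor_cong_def diff_diff_eq[symmetric]
  by (rule fs.span_base) (unfold tensor_relations_def, blast)

lemma tensor_cong_add_right:
  "tensor_cong sM sN (tdelta (u, v + v')) (tdelta (u, v) + tdelta (u, v'))"
  unfolding tensor_cong_def diff_diff_eq[symmetric]
  by (rule fs.span_base) (unfold tensor_relations_def, blast)

lemma tensor_cong_scale_left:
  "tensor_cong sM sN (tdelta (sM c u, v)) (fscale c (tdelta (u, v)))"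
  unfolding tensor_cong_def by (rule fs.span_base) (unfold tensor_relations_def, blast)

lemma tensor_cong_scale_right:
  "tensor_cong sM sN (tdelta (u, sN c v)) (fscale c (tdelta (u, v)))"
  unfolding tensor_cong_def by (rule fs.span_base) (unfold tensor_relations_def, blast)

lemma tensor_cong_scale_swap:
  "tensor_cong sM sN (tdelta (sM c u, v)) (tdelta (u, sN c v))"
  by (rule tensor_cong_trans[OF tensor_cong_scale_left tensor_cong_sym[OF tensor_cong_scale_right]])

lemma tensor_cong_sum_left:
  assumes "module sM" "finite K"
  shows "tensor_cong sM sN (tdelta (\<Sum>k\<in>K. u k, v)) (\<Sum>k\<in>K. tdelta (u k, v))"
  using assms(2)
proof (induction K rule: finite_induct)
  case empty
  show ?case
    using tensor_cong_scale_left[of sM sN 0 "u undefined" v]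
    by (simp add: module.scale_zero_left[OF assms(1)] fscale_def zero_fun_def)
next
  case (insert k K)
  show ?case
    unfolding sum.insert[OF insert.hyps]
  proof (rule tensor_cong_trans[OF tensor_cong_add_left])
    show "tensor_cong sM sN (tdelta (u k, v) + tdelta (sum u K, v))
        (tdelta (u k, v) + (\<Sum>k\<in>K. tdelta (u k, v)))"
      using insert.IH by (simp only: tensor_cong_def add_diff_cancel_left)
  qed
qed

lemma tensor_cong_sum_right:
  assumes "module sN" "finite K"
  shows "tensor_cong sM sN (tdelta (u, \<Sum>k\<in>K. v k)) (\<Sum>k\<in>K. tdelta (u, v k))"
  using assms(2)
proof (induction K rule: finite_induct)
  case empty
  show ?case
    using tensor_cong_scale_right[of sM sN u 0 "v undefined"]
    by (simp add: module.scale_zero_left[OF assms(1)] fscale_def zero_fun_def)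
next
  case (insert k K)
  show ?case
    unfolding sum.insert[OF insert.hyps]
  proof (rule tensor_cong_trans[OF tensor_cong_add_right])
    show "tensor_cong sM sN (tdelta (u, v k) + tdelta (u, sum v K))
        (tdelta (u, v k) + (\<Sum>k\<in>K. tdelta (u, v k)))"
      using insert.IH by (simp only: tensor_cong_def add_diff_cancel_left)
  qed
qed

lemma mult_power_add_eq_0:
  fixes c x y :: "'a::comm_semiring_1"
  assumes "c * x ^ m = 0" "c * y ^ n = 0"
  shows "c * (x + y) ^ (m + n) = 0"
proof -
  have "c * (of_nat (m + n choose k) * x ^ k * y ^ (m + n - k)) = 0" for k
  proof (cases "m \<le> k")
    case True
    then have "x ^ k = x ^ m * x ^ (k - m)"
      by (simp flip: power_add)
    then have "c * (of_nat (m + n choose k) * x ^ k * y ^ (m + n - k)) =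
        c * x ^ m * (of_nat (m + n choose k) * x ^ (k - m) * y ^ (m + n - k))"
      by (simp add: mult_ac)
    with assms(1) show ?thesis by simp
  next
    case False
    then have "y ^ (m + n - k) = y ^ n * y ^ (m - k)"
      by (simp add: add.commute flip: power_add)
    then have "c * (of_nat (m + n choose k) * x ^ k * y ^ (m + n - k)) =
        c * y ^ n * (of_nat (m + n choose k) * x ^ k * y ^ (m - k))"
      by (simp add: mult_ac)
    with assms(2) show ?thesis by simp
  qed
  then show ?thesis
    by (simp add: binomial_ring sum_distrib_left)
qed

lemma mult_power_sum_list_eq_0:
  fixes c :: "'a::comm_semiring_1"
  assumes "\<And>z. z \<in> set zs \<Longrightarrow> c * z ^ 2 = 0"
  shows "c * sum_list zs ^ (2 * length zs + 1) = 0"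
  using assms
proof (induction zs)
  case (Cons z zs)
  have "c * (z + sum_list zs) ^ (2 + (2 * length zs + 1)) = 0"
    using Cons by (intro mult_power_add_eq_0) auto
  then show ?case by simp
qed simp

lemma sum_list_conv_sum_nth: "(\<Sum>z\<leftarrow>zs. f z) = (\<Sum>j<length zs. f (zs ! j))"
  by (simp add: sum_list_sum_nth atLeast0LessThan)

lemma sum_list_concat_map_upt:
  "(\<Sum>z\<leftarrow>concat (map (\<lambda>i. map (g i) [0..<m]) [0..<n]). f z) = (\<Sum>i<n. \<Sum>j<m. f (g i j))"
  by (induction n) (simp_all add: interv_sum_list_conv_sum_set_nat atLeast0LessThan)

lemma dual_spaceD:
  assumes "r \<in> dual_space s"
  shows "r (s c z) = c * r z" "r (z + z') = r z + r z'"
  using assms unfolding dual_space_def by (auto simp: module_hom.scale module_hom.add)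

lemma (in module) scale_sum_list_right: "scale c (\<Sum>z\<leftarrow>zs. f z) = (\<Sum>z\<leftarrow>zs. scale c (f z))"
  by (induction zs) (simp_all add: scale_right_distrib)

(* In P (x) P*, p (x) r and sum_t r(p) p_t (x) q_t have the same evaluation r(p), hence are
   equal; apply the bilinear map (p', q') |-> q'(z) p'. *)
lemma invertible_module_scale_swap:
  fixes sP :: "'k::comm_ring_1 \<Rightarrow> 'p::ab_group_add \<Rightarrow> 'p"
  assumes inv: "invertible_module sP" and r: "r \<in> dual_space sP"
    and ts: "set ts \<subseteq> UNIV \<times> dual_space sP" and one: "(\<Sum>(p, q)\<leftarrow>ts. q p) = 1"
  shows "sP (r z) p = sP (r p) (\<Sum>(p', q')\<leftarrow>ts. sP (q' z) p')"
proof -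
  have P: "module sP"
    using inv by (simp add: invertible_module_def fg_projective_def)
  have inj: "\<And>ts us. set ts \<subseteq> UNIV \<times> dual_space sP \<Longrightarrow> set us \<subseteq> UNIV \<times> dual_space sP \<Longrightarrow>
      (\<Sum>(p, q)\<leftarrow>ts. q p) = (\<Sum>(p, q)\<leftarrow>us. q p) \<Longrightarrow>
      tensor_eq sP UNIV (fscale :: 'k \<Rightarrow> _) (dual_space sP) ts us"
    using inv unfolding invertible_module_def by blast
  let ?us = "map (\<lambda>(p', q'). (sP (r p) p', q')) ts"
  have "(\<Sum>(p', q')\<leftarrow>?us. q' p') = (\<Sum>(p', q')\<leftarrow>ts. r p * q' p')"
    using ts by (auto simp: o_def dual_spaceD intro!: arg_cong[of _ _ sum_list] map_cong)
  also have "\<dots> = r p"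
    using one by (simp add: sum_list_const_mult case_prod_beta')
  finally have "(\<Sum>(p', q')\<leftarrow>[(p, r)]. q' p') = (\<Sum>(p', q')\<leftarrow>?us. q' p')"
    by simp
  then have "tensor_eq sP UNIV fscale (dual_space sP) [(p, r)] ?us"
    by (rule inj[rotated 2]) (use r ts in auto)
  then have "(\<Sum>(p', q')\<leftarrow>[(p, r)]. sP (q' z) p') = (\<Sum>(p', q')\<leftarrow>?us. sP (q' z) p')"
    by (intro module.tensor_eq_bilinear[OF P])
      (auto simp: module.scale_right_distrib[OF P] module.scale_left_distrib[OF P]
        module.scale_scale[OF P] fscale_def mult.commute)
  then show ?thesis
    by (simp add: o_def case_prod_beta' module.scale_scale[OF P] mult.commute
        module.scale_sum_list_right[OF P])
qed

lemma invertible_module_dual_comm: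
  fixes sP :: "'k::comm_ring_1 \<Rightarrow> 'p::ab_group_add \<Rightarrow> 'p"
  assumes inv: "invertible_module sP" and "r \<in> dual_space sP" "r' \<in> dual_space sP"
  shows "r z * r' p = r p * r' z"
proof -
  have P: "module sP"
    using inv by (simp add: invertible_module_def fg_projective_def)
  obtain N :: nat and e f where f: "\<forall>i<N. f i \<in> dual_space sP"
    and basis: "\<forall>z. z = (\<Sum>i<N. sP (f i z) (e i))"
    using inv unfolding invertible_module_def fg_projective_def by blast
  obtain ts where ts: "set ts \<subseteq> UNIV \<times> dual_space sP" and one: "(\<Sum>(p, q)\<leftarrow>ts. q p) = 1"
    using inv unfolding invertible_module_def by blast
  define E where "E z = (\<Sum>(p', q')\<leftarrow>ts. sP (q' z) p')" for z
  define \<tau> where "\<tau> = (\<Sum>i<N. f i (e i))"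
  have swap: "sP (r z) p = sP (r p) (E z)" if "r \<in> dual_space sP" for r z p
    unfolding E_def using invertible_module_scale_swap[OF inv that ts one] .
  have trace: "z = sP \<tau> (E z)" for z
  proof -
    have "z = (\<Sum>i<N. sP (f i z) (e i))"
      using basis by blast
    also have "\<dots> = (\<Sum>i<N. sP (f i (e i)) (E z))"
      using f by (intro sum.cong refl swap) auto
    also have "\<dots> = sP \<tau> (E z)"
      by (simp add: \<tau>_def module.scale_sum_left[OF P])
    finally show ?thesis .
  qed
  have comm_trace: "\<tau> * (r z * r' p) = r p * r' z"
    if r: "r \<in> dual_space sP" and r': "r' \<in> dual_space sP" for r r' z p
  proof -
    have "r' z = \<tau> * r' (E z)"
      using trace[of z] dual_spaceD(1)[OF r'] by metis
    moreover have "r z * r' p = r p * r' (E z)"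
      using arg_cong[OF swap[OF r], of r'] dual_spaceD(1)[OF r'] by simp
    ultimately show ?thesis
      by (simp add: mult_ac)
  qed
  \<comment> \<open>\<open>1 - \<tau>\<close> kills each \<open>c\<^sup>2\<close>, hence a power of their sum \<open>1\<close>.\<close>
  have "(1 - \<tau>) * c ^ 2 = 0" if c_in: "c \<in> set (map (\<lambda>(p, q). q p) ts)" for c
  proof -
    obtain p q where "(p, q) \<in> set ts" and c: "c = q p"
      using c_in by auto
    then have "q \<in> dual_space sP"
      using ts by auto
    from comm_trace[OF this this, of p p] c show ?thesis
      by (simp add: power2_eq_square left_diff_distrib)
  qed
  then have "(1 - \<tau>) * (\<Sum>(p, q)\<leftarrow>ts. q p) ^ (2 * length (map (\<lambda>(p, q). q p) ts) + 1) = 0"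
    by (rule mult_power_sum_list_eq_0)
  then have "\<tau> = 1"
    using one by simp
  with comm_trace assms show ?thesis
    by simp
qed

locale frobenius_algebra_system =
  fixes sP :: "'k::comm_ring_1 \<Rightarrow> 'p::ab_group_add \<Rightarrow> 'p"
    and sA :: "'k \<Rightarrow> 'a::ring_1 \<Rightarrow> 'a"
    and \<psi> :: "'a \<Rightarrow> 'p"
    and n :: nat and x :: "nat \<Rightarrow> 'a" and q :: "nat \<Rightarrow> 'p \<Rightarrow> 'k" and y :: "nat \<Rightarrow> 'a"
  assumes algebra: "k_algebra sA"
    and system: "frobenius_system sP sA \<psi> n x q y"
begin

lemma module_A: "module sA"
  using algebra by (simp add: k_algebra_def)

lemma scale_mult_left: "sA c (a * b) = sA c a * b"
  using algebra by (simp add: k_algebra_def)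

lemma scale_mult_right: "sA c (a * b) = a * sA c b"
  using algebra unfolding k_algebra_def by blast

lemma q_dual: "i < n \<Longrightarrow> q i \<in> dual_space sP"
  using system by (simp add: frobenius_system_def)

lemma expansion_x: "(\<Sum>i<n. sA (q i (\<psi> (y i * a))) (x i)) = a"
  using system by (simp add: frobenius_system_def)

lemma expansion_y: "(\<Sum>i<n. sA (q i (\<psi> (a * x i))) (y i)) = a"
  using system by (simp add: frobenius_system_def)

lemma psi_hom: "module_hom sA sP \<psi>"
  using system by (simp add: frobenius_system_def)

lemma psi_add: "\<psi> (a + b) = \<psi> a + \<psi> b"
  by (rule module_hom.add[OF psi_hom])

lemma psi_scale: "\<psi> (sA c a) = sP c (\<psi> a)"
  by (rule module_hom.scale[OF psi_hom])

lemma separable_imp_unit_sum: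
  assumes "separable_algebra sA"
  shows "\<exists>(m::nat) (p::nat \<Rightarrow> 'p) (a::nat \<Rightarrow> 'a).
    (\<Sum>i<n. \<Sum>j<m. x i * sA (q i (p j)) (a j) * y i) = 1"
proof -
  obtain es where unit: "(\<Sum>(u, v)\<leftarrow>es. u * v) = 1"
    and central: "\<And>b. tensor_eq sA UNIV sA UNIV
      (map (\<lambda>(u, v). (b * u, v)) es) (map (\<lambda>(u, v). (u, v * b)) es)"
    using assms unfolding separable_algebra_def by blast
  define m where "m = length es"
  define u where "u j = fst (es ! j)" for j
  define v where "v j = snd (es ! j)" for j
  have swap: "(\<Sum>j<m. sA (q i (\<psi> (v j * x i))) (u j)) = (\<Sum>j<m. x i * sA (q i (\<psi> (v j))) (u j))"
    if "i < n" for i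
  proof -
    have "(\<Sum>(a, b)\<leftarrow>map (\<lambda>(u, v). (x i * u, v)) es. sA (q i (\<psi> b)) a) =
          (\<Sum>(a, b)\<leftarrow>map (\<lambda>(u, v). (u, v * x i)) es. sA (q i (\<psi> b)) a)"
      using module_A dual_spaceD[OF q_dual[OF that]]
      by (intro module.tensor_eq_bilinear[OF module_A, where M=UNIV and N=UNIV, OF _ _ _ _ central])
        (auto simp: module.scale_right_distrib module.scale_left_distrib module.scale_scale
          mult.commute psi_add psi_scale)
    then show ?thesis
      by (simp add: sum_list_conv_sum_nth m_def u_def v_def case_prod_beta' scale_mult_right)
  qed
  have "1 = (\<Sum>j<m. u j * v j)"
    using unit by (simp add: sum_list_conv_sum_nth m_def u_def v_def case_prod_beta')
  also have "\<dots> = (\<Sum>j<m. u j * (\<Sum>i<n. sA (q i (\<psi> (v j * x i))) (y i)))"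
    by (simp add: expansion_y)
  also have "\<dots> = (\<Sum>j<m. \<Sum>i<n. sA (q i (\<psi> (v j * x i))) (u j) * y i)"
    by (simp add: sum_distrib_left scale_mult_left flip: scale_mult_right)
  also have "\<dots> = (\<Sum>i<n. (\<Sum>j<m. sA (q i (\<psi> (v j * x i))) (u j)) * y i)"
    by (subst sum.swap) (simp add: sum_distrib_right)
  also have "\<dots> = (\<Sum>i<n. \<Sum>j<m. x i * sA (q i (\<psi> (v j))) (u j) * y i)"
    using swap by (simp add: sum_distrib_right)
  finally show ?thesis
    by (intro exI[of _ m] exI[of _ "\<lambda>j. \<psi> (v j)"] exI[of _ u]) simp
qed

(* The common normal form of b e and e b: expand b x_k along the x_i, respectively y_i b along
   the y_k. *)
lemma casimir_left:
  "tensor_cong sA sA (\<Sum>k<n. tdelta (b * x k, sA (q k p) w * y k))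
     (\<Sum>i<n. \<Sum>k<n. tdelta (x i, sA (q i (\<psi> (y i * b * x k)) * q k p) (w * y k)))"
proof -
  have "tensor_cong sA sA (\<Sum>k<n. tdelta (b * x k, sA (q k p) w * y k))
     (\<Sum>k<n. \<Sum>i<n. tdelta (x i, sA (q i (\<psi> (y i * b * x k)) * q k p) (w * y k)))"
  proof (rule tensor_cong_sum)
    fix k
    have expand: "b * x k = (\<Sum>i<n. sA (q i (\<psi> (y i * b * x k))) (x i))"
      using expansion_x[of "b * x k"] by (simp add: mult.assoc)
    have "tensor_cong sA sA (tdelta (b * x k, sA (q k p) w * y k))
        (\<Sum>i<n. tdelta (sA (q i (\<psi> (y i * b * x k))) (x i), sA (q k p) w * y k))"
      by (subst expand) (rule tensor_cong_sum_left[OF module_A finite_lessThan])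
    also have "tensor_cong sA sA \<dots>
        (\<Sum>i<n. tdelta (x i, sA (q i (\<psi> (y i * b * x k))) (sA (q k p) w * y k)))"
      by (intro tensor_cong_sum tensor_cong_scale_swap)
    finally show "tensor_cong sA sA (tdelta (b * x k, sA (q k p) w * y k))
        (\<Sum>i<n. tdelta (x i, sA (q i (\<psi> (y i * b * x k)) * q k p) (w * y k)))"
      by (simp add: module.scale_scale[OF module_A] flip: scale_mult_left)
  qed
  then show ?thesis
    by (subst sum.swap)
qed

end

locale invertible_frobenius_algebra_system = frobenius_algebra_system +
  assumes invertible: "invertible_module sP"
begin

lemma casimir_right:
  "tensor_cong sA sA (\<Sum>i<n. tdelta (x i, sA (q i p) w * y i * b))
     (\<Sum>i<n. \<Sum>k<n. tdelta (x i, sA (q i (\<psi> (y i * b * x k)) * q k p) (w * y k)))"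
proof (rule tensor_cong_sum)
  fix i assume i: "i \<in> {..<n}"
  have "sA (q i p) w * y i * b = sA (q i p) w * (\<Sum>k<n. sA (q k (\<psi> (y i * b * x k))) (y k))"
    using expansion_y[of "y i * b"] by (simp add: mult.assoc)
  also have "\<dots> = (\<Sum>k<n. sA (q i p * q k (\<psi> (y i * b * x k))) (w * y k))"
    by (simp add: sum_distrib_left module.scale_scale[OF module_A] mult.commute
        flip: scale_mult_left scale_mult_right)
  also have "\<dots> = (\<Sum>k<n. sA (q i (\<psi> (y i * b * x k)) * q k p) (w * y k))"
    using i q_dual invertible_module_dual_comm[OF invertible] by (intro sum.cong) auto
  finally have expand:
    "sA (q i p) w * y i * b = (\<Sum>k<n. sA (q i (\<psi> (y i * b * x k)) * q k p) (w * y k))" .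
  show "tensor_cong sA sA (tdelta (x i, sA (q i p) w * y i * b))
      (\<Sum>k<n. tdelta (x i, sA (q i (\<psi> (y i * b * x k)) * q k p) (w * y k)))"
    by (subst expand) (rule tensor_cong_sum_right[OF module_A finite_lessThan])
qed

lemma casimir_commute:
  "tensor_cong sA sA (\<Sum>i<n. tdelta (b * x i, sA (q i p) w * y i))
     (\<Sum>i<n. tdelta (x i, sA (q i p) w * y i * b))"
  using tensor_cong_trans[OF casimir_left tensor_cong_sym[OF casimir_right]] .

lemma unit_sum_imp_separable:
  fixes m :: nat
  assumes "(\<Sum>i<n. \<Sum>j<m. x i * sA (q i (p j)) (a j) * y i) = 1"
  shows "separable_algebra sA"
proof -
  define es where
    "es = concat (map (\<lambda>i. map (\<lambda>j. (x i, sA (q i (p j)) (a j) * y i)) [0..<m]) [0..<n])"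
  have "(\<Sum>(u, v)\<leftarrow>es. u * v) = 1"
    unfolding es_def sum_list_concat_map_upt using assms by (simp add: mult.assoc)
  moreover have "tensor_eq sA UNIV sA UNIV
      (map (\<lambda>(u, v). (b * u, v)) es) (map (\<lambda>(u, v). (u, v * b)) es)" for b
  proof -
    have "tensor_cong sA sA
        (\<Sum>j<m. \<Sum>i<n. tdelta (b * x i, sA (q i (p j)) (a j) * y i))
        (\<Sum>j<m. \<Sum>i<n. tdelta (x i, sA (q i (p j)) (a j) * y i * b))"
      by (intro tensor_cong_sum casimir_commute)
    then show ?thesis
      unfolding tensor_eq_UNIV_iff formal_sum_def map_map es_def sum_list_concat_map_upt
      by (subst (1 2) sum.swap) (simp add: o_def)
  qed
  ultimately show ?thesis
    unfolding separable_algebra_def by blast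
qed

end

theorem proposition6p1:
  fixes sP :: "'k::comm_ring_1 \<Rightarrow> 'p::ab_group_add \<Rightarrow> 'p"
    and sA :: "'k \<Rightarrow> 'a::ring_1 \<Rightarrow> 'a"
    and \<psi> :: "'a \<Rightarrow> 'p"
    and n :: nat and x y :: "nat \<Rightarrow> 'a" and q :: "nat \<Rightarrow> 'p \<Rightarrow> 'k"
  assumes "invertible_module sP"
    and "k_algebra sA"
    and "P_frobenius sP sA"
    and "frobenius_system sP sA \<psi> n x q y"
  shows "separable_algebra sA \<longleftrightarrow>
    (\<exists>(m::nat) (p::nat \<Rightarrow> 'p) (a::nat \<Rightarrow> 'a).
       (\<Sum>i<n. \<Sum>j<m. x i * sA (q i (p j)) (a j) * y i) = 1)"
proof -
  interpret invertible_frobenius_algebra_system sP sA \<psi> n x q y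
    using assms(1,2,4) by unfold_locales
  show ?thesis
    using separable_imp_unit_sum unit_sum_imp_separable by blast
qed

end
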